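(* Let $\phi:M_D(\mathbb{C})\to M_D(\mathbb{C})$ be a primitive unital Schwarz map. Then $\mathcal{M}^\infty_\phi=\bigcap_{n\in\mathbb{N}}\mathcal{M}_{\phi^n}=\mathbb{C}I$.
   Context: $M_D(\mathbb{C})$ is the algebra of complex $D\times D$ matrices. A linear map $\phi$ is a unital Schwarz map if $\phi(I)=I$ and $\phi(a^*a)\ge\phi(a)^*\phi(a)$ for all $a$; it is primitive if some power $\phi^n$ maps every nonzero positive semidefinite matrix to a positive definite matrix. For a unital Schwarz map $\psi$, the multiplicative domain is $\mathcal{M}_\psi=\{a : \psi(a^*a)=\psi(a)^*\psi(a) \text{ and } \psi(aa^* )=\psi(a)\psi(a)^*\}$. For primitive unital Schwarz $\phi$ these form a decreasing sequence $\mathcal{M}_{\phi^{n+1}}\subseteq\mathcal{M}_{\phi^n}$; $\kappa(\phi)$ is the minimal $k$ with $\bigcap_n\mathcal{M}_{\phi^n}=\mathcal{M}_{\phi^k}$, and $\mathcal{M}^\infty_\phi:=\mathcal{M}_{\phi^{\kappa(\phi)}}$. *)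

theory Defs
  imports Complex_Main "Jordan_Normal_Form.Schur_Decomposition"
begin

text \<open>Matrices in M_D(C) are represented as elements of carrier_mat D D :: complex mat.
  A map on M_D(C) is a function complex mat => complex mat, considered on carrier_mat D D.\<close>

definition quad_form :: "complex mat \<Rightarrow> complex vec \<Rightarrow> complex" where
  "quad_form A v = conjugate v \<bullet> (A *\<^sub>v v)"

definition psd :: "nat \<Rightarrow> complex mat \<Rightarrow> bool" where
  "psd D A \<longleftrightarrow> A \<in> carrier_mat D D \<and>
     (\<forall>v \<in> carrier_vec D. Im (quad_form A v) = 0 \<and> Re (quad_form A v) \<ge> 0)"

definition pd :: "nat \<Rightarrow> complex mat \<Rightarrow> bool" where
  "pd D A \<longleftrightarrow> A \<in> carrier_mat D D \<and>
     (\<forall>v \<in> carrier_vec D. v \<noteq> 0\<^sub>v D \<longrightarrow> Im (quad_form A v) = 0 \<and> Re (quad_form A v) > 0)"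

definition lin_map :: "nat \<Rightarrow> (complex mat \<Rightarrow> complex mat) \<Rightarrow> bool" where
  "lin_map D \<phi> \<longleftrightarrow>
     (\<forall>a \<in> carrier_mat D D. \<phi> a \<in> carrier_mat D D) \<and>
     (\<forall>a \<in> carrier_mat D D. \<forall>b \<in> carrier_mat D D. \<phi> (a + b) = \<phi> a + \<phi> b) \<and>
     (\<forall>c. \<forall>a \<in> carrier_mat D D. \<phi> (c \<cdot>\<^sub>m a) = c \<cdot>\<^sub>m \<phi> a)"

definition unital_schwarz :: "nat \<Rightarrow> (complex mat \<Rightarrow> complex mat) \<Rightarrow> bool" where
  "unital_schwarz D \<phi> \<longleftrightarrow> lin_map D \<phi> \<and> \<phi> (1\<^sub>m D) = 1\<^sub>m D \<and>
     (\<forall>a \<in> carrier_mat D D.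
        psd D (\<phi> (mat_adjoint a * a) - mat_adjoint (\<phi> a) * \<phi> a))"

definition primitive :: "nat \<Rightarrow> (complex mat \<Rightarrow> complex mat) \<Rightarrow> bool" where
  "primitive D \<phi> \<longleftrightarrow> (\<exists>n. \<forall>P. psd D P \<and> P \<noteq> 0\<^sub>m D D \<longrightarrow> pd D ((\<phi> ^^ n) P))"

definition mult_domain :: "nat \<Rightarrow> (complex mat \<Rightarrow> complex mat) \<Rightarrow> complex mat set" where
  "mult_domain D \<psi> = {a \<in> carrier_mat D D.
      \<psi> (mat_adjoint a * a) = mat_adjoint (\<psi> a) * \<psi> a \<and>
      \<psi> (a * mat_adjoint a) = \<psi> a * mat_adjoint (\<psi> a)}"

definition mult_domain_inter :: "nat \<Rightarrow> (complex mat \<Rightarrow> complex mat) \<Rightarrow> complex mat set" where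
  "mult_domain_inter D \<phi> = (\<Inter>n \<in> {1..}. mult_domain D (\<phi> ^^ n))"

definition kappa :: "nat \<Rightarrow> (complex mat \<Rightarrow> complex mat) \<Rightarrow> nat" where
  "kappa D \<phi> = (LEAST k. 1 \<le> k \<and> mult_domain_inter D \<phi> = mult_domain D (\<phi> ^^ k))"

definition mult_domain_inf :: "nat \<Rightarrow> (complex mat \<Rightarrow> complex mat) \<Rightarrow> complex mat set" where
  "mult_domain_inf D \<phi> = mult_domain D (\<phi> ^^ kappa D \<phi>)"

end

(*
  Let N be such that psi = phi^N maps nonzero positive semidefinite matrices to positive
  definite ones. Schwarz maps are positive, since every positive semidefinite matrix is a sum
  of Gram matrices Y* Y (Cholesky), so psi is again a unital Schwarz map, and by Choi's
  argument every a with psi(a* a) = psi(a)* psi(a) satisfies psi(x* a) = psi(x)* psi(a) for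
  all x. Take an eigenvector v of a* with eigenvalue mu, put c = a - conj(mu) I and let
  P = v v* be the rank-one matrix of v. Then P c = 0, hence psi(P)* psi(c) = 0, and since psi(P)
  is invertible, psi(c) = 0. Thus psi(c* c) = psi(c)* psi(c) = 0, which forces c = 0. So the
  multiplicative domain of psi consists of scalars; conversely the scalars lie in every
  multiplicative domain because all powers of phi are unital. For D >= 2 the exponent N is
  positive, and for D <= 1 every matrix is scalar.
*)
theory Submission
  imports Defs "Jordan_Normal_Form.Spectral_Radius"
begin

section \<open>Matrices and adjoints\<close>

lemma dim_mat_adjoint [simp]:
  "dim_row (mat_adjoint A) = dim_col A" "dim_col (mat_adjoint A) = dim_row A"
  unfolding mat_adjoint_def by auto

lemma index_mat_adjoint [simp]:
  "i < dim_col A \<Longrightarrow> j < dim_row A \<Longrightarrow> mat_adjoint A $$ (i, j) = cnj (A $$ (j, i))"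
  unfolding mat_adjoint_def by (simp add: mat_of_rows_def)

lemma mat_adjoint_carrier [simp]: "A \<in> carrier_mat n m \<Longrightarrow> mat_adjoint A \<in> carrier_mat m n"
  unfolding carrier_mat_def by simp

lemma mat_adjoint_add:
  "(A :: complex mat) \<in> carrier_mat n m \<Longrightarrow> B \<in> carrier_mat n m \<Longrightarrow>
    mat_adjoint (A + B) = mat_adjoint A + mat_adjoint B"
  by (rule eq_matI) (simp_all add: carrier_matD)

lemma mat_adjoint_smult: "mat_adjoint (c \<cdot>\<^sub>m A) = cnj c \<cdot>\<^sub>m mat_adjoint A"
  by (rule eq_matI) simp_all

lemma mat_adjoint_one [simp]: "mat_adjoint (1\<^sub>m n :: complex mat) = 1\<^sub>m n"
  by (rule eq_matI) simp_all

lemma mult_mat_adjoint_carrier [simp]: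
  "A \<in> carrier_mat n n \<Longrightarrow> B \<in> carrier_mat n n \<Longrightarrow> mat_adjoint A * B \<in> carrier_mat n n"
  by (rule mult_carrier_mat) simp_all

lemma mult_mat_vec_index:
  "M \<in> carrier_mat n n \<Longrightarrow> v \<in> carrier_vec n \<Longrightarrow> i < n \<Longrightarrow>
    (M *\<^sub>v v) $ i = (\<Sum>j<n. M $$ (i, j) * v $ j)"
  by (simp add: scalar_prod_def atLeast0LessThan)

lemma mult_mat_index:
  "A \<in> carrier_mat n n \<Longrightarrow> B \<in> carrier_mat n n \<Longrightarrow> i < n \<Longrightarrow> j < n \<Longrightarrow>
    (A * B) $$ (i, j) = (\<Sum>l<n. A $$ (i, l) * B $$ (l, j))"
  by (simp add: scalar_prod_def atLeast0LessThan)

lemma minus_eq_0_imp_eq: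
  assumes "(A :: complex mat) - B = 0\<^sub>m n m" and "A \<in> carrier_mat n m" and "B \<in> carrier_mat n m"
  shows "A = B"
proof (rule eq_matI)
  fix i j assume "i < dim_row B" "j < dim_col B"
  then show "A $$ (i, j) = B $$ (i, j)"
    using assms by (metis carrier_matD eq_iff_diff_eq_0 index_minus_mat(1) index_zero_mat(1))
qed (use assms in auto)

lemma adjoint_mult_expand:
  assumes B: "B \<in> carrier_mat n n" and X: "X \<in> carrier_mat n n"
  shows "mat_adjoint (B + t \<cdot>\<^sub>m X) * (B + t \<cdot>\<^sub>m X) =
    (mat_adjoint B * B + t \<cdot>\<^sub>m (mat_adjoint B * X)) +
    (cnj t \<cdot>\<^sub>m (mat_adjoint X * B) + cnj t \<cdot>\<^sub>m (t \<cdot>\<^sub>m (mat_adjoint X * X)))"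
proof -
  have tX: "t \<cdot>\<^sub>m X \<in> carrier_mat n n" and BtX: "B + t \<cdot>\<^sub>m X \<in> carrier_mat n n" using X by simp_all
  have aB: "mat_adjoint B \<in> carrier_mat n n" and aX: "mat_adjoint X \<in> carrier_mat n n"
    using B X by simp_all
  have "mat_adjoint (B + t \<cdot>\<^sub>m X) * (B + t \<cdot>\<^sub>m X) =
      (mat_adjoint B + cnj t \<cdot>\<^sub>m mat_adjoint X) * (B + t \<cdot>\<^sub>m X)"
    using mat_adjoint_add[OF B tX] by (simp add: mat_adjoint_smult)
  also have "\<dots> = mat_adjoint B * (B + t \<cdot>\<^sub>m X) + (cnj t \<cdot>\<^sub>m mat_adjoint X) * (B + t \<cdot>\<^sub>m X)"
    using aX by (intro add_mult_distrib_mat[OF aB _ BtX]) simp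
  also have "mat_adjoint B * (B + t \<cdot>\<^sub>m X) = mat_adjoint B * B + t \<cdot>\<^sub>m (mat_adjoint B * X)"
    using mult_add_distrib_mat[OF aB B tX] mult_smult_distrib[OF aB X] by simp
  also have "(cnj t \<cdot>\<^sub>m mat_adjoint X) * (B + t \<cdot>\<^sub>m X) = cnj t \<cdot>\<^sub>m (mat_adjoint X * (B + t \<cdot>\<^sub>m X))"
    by (rule mult_smult_assoc_mat[OF aX BtX])
  also have "mat_adjoint X * (B + t \<cdot>\<^sub>m X) = mat_adjoint X * B + t \<cdot>\<^sub>m (mat_adjoint X * X)"
    using mult_add_distrib_mat[OF aX B tX] mult_smult_distrib[OF aX X] by simp
  also have "cnj t \<cdot>\<^sub>m (mat_adjoint X * B + t \<cdot>\<^sub>m (mat_adjoint X * X)) =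
      cnj t \<cdot>\<^sub>m (mat_adjoint X * B) + cnj t \<cdot>\<^sub>m (t \<cdot>\<^sub>m (mat_adjoint X * X))"
    by (rule add_smult_distrib_left_mat[of _ n n]) (use aX B X in simp_all)
  finally show ?thesis .
qed

lemma adjoint_mult_self_eq_0:
  fixes c :: "complex mat"
  assumes c: "c \<in> carrier_mat n n" and zero: "mat_adjoint c * c = 0\<^sub>m n n"
  shows "c = 0\<^sub>m n n"
proof (rule eq_matI)
  fix i j assume "i < dim_row (0\<^sub>m n n :: complex mat)" and "j < dim_col (0\<^sub>m n n :: complex mat)"
  then have i: "i < n" and j: "j < n" by simp_all
  have "(mat_adjoint c * c) $$ (j, j) = (\<Sum>l<n. mat_adjoint c $$ (j, l) * c $$ (l, j))"
    by (rule mult_mat_index) (use c j in simp_all)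
  also have "\<dots> = (\<Sum>l<n. cnj (c $$ (l, j)) * c $$ (l, j))"
    by (rule sum.cong) (use c j in simp_all)
  finally have "Re (\<Sum>l<n. cnj (c $$ (l, j)) * c $$ (l, j)) = 0" using zero j by simp
  moreover have "Re (cnj z * z) = (cmod z)\<^sup>2" for z
    unfolding cmod_power2 by (simp add: power2_eq_square)
  ultimately have "(\<Sum>l<n. (cmod (c $$ (l, j)))\<^sup>2) = 0" by (simp only: Re_sum)
  then have "c $$ (i, j) = 0" using i by (simp add: sum_nonneg_eq_0_iff)
  then show "c $$ (i, j) = 0\<^sub>m n n $$ (i, j)" using i j by simp
qed (use c in simp_all)

lemma smult_one_mult_smult_one: "(x \<cdot>\<^sub>m 1\<^sub>m n) * (y \<cdot>\<^sub>m 1\<^sub>m n :: complex mat) = (x * y) \<cdot>\<^sub>m 1\<^sub>m n"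
proof -
  have "(x \<cdot>\<^sub>m 1\<^sub>m n) * (y \<cdot>\<^sub>m 1\<^sub>m n) = x \<cdot>\<^sub>m (1\<^sub>m n * (y \<cdot>\<^sub>m (1\<^sub>m n :: complex mat)))"
    by (rule mult_smult_assoc_mat[OF one_carrier_mat smult_carrier_mat[OF one_carrier_mat]])
  also have "1\<^sub>m n * (y \<cdot>\<^sub>m (1\<^sub>m n :: complex mat)) = y \<cdot>\<^sub>m 1\<^sub>m n"
    by (rule left_mult_one_mat[OF smult_carrier_mat[OF one_carrier_mat]])
  finally show ?thesis by (intro eq_matI) auto
qed

lemma add_smult_one_eq_0D:
  assumes a: "(a :: complex mat) \<in> carrier_mat n n" and zero: "a + (- k) \<cdot>\<^sub>m 1\<^sub>m n = 0\<^sub>m n n"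
  shows "a = k \<cdot>\<^sub>m 1\<^sub>m n"
proof (rule eq_matI)
  fix i j assume "i < dim_row (k \<cdot>\<^sub>m 1\<^sub>m n)" and "j < dim_col (k \<cdot>\<^sub>m 1\<^sub>m n)"
  then have i: "i < n" and j: "j < n" by simp_all
  have "(a + (- k) \<cdot>\<^sub>m 1\<^sub>m n) $$ (i, j) = 0" using zero i j by simp
  then show "a $$ (i, j) = (k \<cdot>\<^sub>m 1\<^sub>m n) $$ (i, j)" using a i j by (cases "i = j") simp_all
qed (use a in simp_all)

lemma mat_adjoint_shift_mult_eigenvector_eq_0:
  assumes a: "a \<in> carrier_mat n n" and v: "v \<in> carrier_vec n" and ev: "mat_adjoint a *\<^sub>v v = \<mu> \<cdot>\<^sub>v v"
  shows "mat_adjoint (a + (- cnj \<mu>) \<cdot>\<^sub>m 1\<^sub>m n) *\<^sub>v v = 0\<^sub>v n"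
proof (rule eq_vecI)
  fix i assume "i < dim_vec (0\<^sub>v n :: complex vec)"
  then have i: "i < n" by simp
  have "(mat_adjoint (a + (- cnj \<mu>) \<cdot>\<^sub>m 1\<^sub>m n) *\<^sub>v v) $ i =
      (\<Sum>l<n. mat_adjoint (a + (- cnj \<mu>) \<cdot>\<^sub>m 1\<^sub>m n) $$ (i, l) * v $ l)"
    by (rule mult_mat_vec_index) (use a v i in simp_all)
  also have "\<dots> = (\<Sum>l<n. mat_adjoint a $$ (i, l) * v $ l + (if l = i then - \<mu> * v $ i else 0))"
    by (rule sum.cong) (use a i in \<open>simp_all add: algebra_simps\<close>)
  also have "\<dots> = (\<Sum>l<n. mat_adjoint a $$ (i, l) * v $ l) - \<mu> * v $ i"
    using i by (simp add: sum.distrib)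
  also have "(\<Sum>l<n. mat_adjoint a $$ (i, l) * v $ l) = (mat_adjoint a *\<^sub>v v) $ i"
    by (rule mult_mat_vec_index[symmetric]) (use a v i in simp_all)
  finally show "(mat_adjoint (a + (- cnj \<mu>) \<cdot>\<^sub>m 1\<^sub>m n) *\<^sub>v v) $ i = 0\<^sub>v n $ i"
    using ev v i by simp
qed (use a in simp)

lemma carrier_mat_le_1_scalar:
  assumes "n \<le> 1" and "(a :: complex mat) \<in> carrier_mat n n"
  shows "a = a $$ (0, 0) \<cdot>\<^sub>m 1\<^sub>m n"
proof (rule eq_matI)
  fix i j assume "i < dim_row (a $$ (0, 0) \<cdot>\<^sub>m 1\<^sub>m n)" and "j < dim_col (a $$ (0, 0) \<cdot>\<^sub>m 1\<^sub>m n)"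
  then have "i < n" and "i = 0" and "j = 0" using assms(1) by simp_all
  then show "a $$ (i, j) = (a $$ (0, 0) \<cdot>\<^sub>m 1\<^sub>m n) $$ (i, j)" by simp
qed (use assms in simp_all)

section \<open>The sesquilinear form\<close>

definition sesq :: "nat \<Rightarrow> complex mat \<Rightarrow> complex vec \<Rightarrow> complex vec \<Rightarrow> complex" where
  "sesq n M u v = (\<Sum>i<n. \<Sum>j<n. cnj (u $ i) * M $$ (i, j) * v $ j)"

lemma sum2_cong:
  "(\<And>i j. i < n \<Longrightarrow> j < n \<Longrightarrow> f i j = g i j) \<Longrightarrow>
    (\<Sum>i<n. \<Sum>j<n. f i j) = (\<Sum>i<n. \<Sum>j<n. g i j)"
  by (rule sum.cong, simp, rule sum.cong, simp_all)

lemma sesq_add_mat: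
  assumes "A \<in> carrier_mat n n" and "B \<in> carrier_mat n n"
  shows "sesq n (A + B) u v = sesq n A u v + sesq n B u v"
proof -
  have "sesq n (A + B) u v =
      (\<Sum>i<n. \<Sum>j<n. cnj (u $ i) * A $$ (i, j) * v $ j + cnj (u $ i) * B $$ (i, j) * v $ j)"
    unfolding sesq_def by (rule sum2_cong) (use assms in \<open>simp add: algebra_simps\<close>)
  then show ?thesis unfolding sesq_def by (simp add: sum.distrib)
qed

lemma sesq_minus_mat:
  assumes "A \<in> carrier_mat n n" and "B \<in> carrier_mat n n"
  shows "sesq n (A - B) u v = sesq n A u v - sesq n B u v"
proof -
  have "sesq n (A - B) u v =
      (\<Sum>i<n. \<Sum>j<n. cnj (u $ i) * A $$ (i, j) * v $ j - cnj (u $ i) * B $$ (i, j) * v $ j)"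
    unfolding sesq_def by (rule sum2_cong) (use assms in \<open>simp add: algebra_simps\<close>)
  then show ?thesis unfolding sesq_def by (simp add: sum_subtractf)
qed

lemma sesq_smult_mat:
  assumes "A \<in> carrier_mat n n"
  shows "sesq n (c \<cdot>\<^sub>m A) u v = c * sesq n A u v"
proof -
  have "sesq n (c \<cdot>\<^sub>m A) u v = (\<Sum>i<n. \<Sum>j<n. c * (cnj (u $ i) * A $$ (i, j) * v $ j))"
    unfolding sesq_def by (rule sum2_cong) (use assms in \<open>simp add: algebra_simps\<close>)
  then show ?thesis unfolding sesq_def by (simp add: sum_distrib_left)
qed

lemma sesq_zero_mat [simp]: "sesq n (0\<^sub>m n n) u v = 0"
  unfolding sesq_def by (simp add: sum.neutral)

lemma sesq_add_left:
  assumes "u \<in> carrier_vec n" and "w \<in> carrier_vec n"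
  shows "sesq n M (u + w) v = sesq n M u v + sesq n M w v"
proof -
  have "sesq n M (u + w) v =
      (\<Sum>i<n. \<Sum>j<n. cnj (u $ i) * M $$ (i, j) * v $ j + cnj (w $ i) * M $$ (i, j) * v $ j)"
    unfolding sesq_def by (rule sum2_cong) (use assms in \<open>simp add: algebra_simps\<close>)
  then show ?thesis unfolding sesq_def by (simp add: sum.distrib)
qed

lemma sesq_add_right:
  assumes "u \<in> carrier_vec n" and "w \<in> carrier_vec n"
  shows "sesq n M v (u + w) = sesq n M v u + sesq n M v w"
proof -
  have "sesq n M v (u + w) =
      (\<Sum>i<n. \<Sum>j<n. cnj (v $ i) * M $$ (i, j) * u $ j + cnj (v $ i) * M $$ (i, j) * w $ j)"
    unfolding sesq_def by (rule sum2_cong) (use assms in \<open>simp add: algebra_simps\<close>)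
  then show ?thesis unfolding sesq_def by (simp add: sum.distrib)
qed

lemma sesq_smult_left:
  assumes "u \<in> carrier_vec n"
  shows "sesq n M (c \<cdot>\<^sub>v u) v = cnj c * sesq n M u v"
proof -
  have "sesq n M (c \<cdot>\<^sub>v u) v = (\<Sum>i<n. \<Sum>j<n. cnj c * (cnj (u $ i) * M $$ (i, j) * v $ j))"
    unfolding sesq_def by (rule sum2_cong) (use assms in \<open>simp add: algebra_simps\<close>)
  then show ?thesis unfolding sesq_def by (simp add: sum_distrib_left)
qed

lemma sesq_smult_right:
  assumes "u \<in> carrier_vec n"
  shows "sesq n M v (c \<cdot>\<^sub>v u) = c * sesq n M v u"
proof -
  have "sesq n M v (c \<cdot>\<^sub>v u) = (\<Sum>i<n. \<Sum>j<n. c * (cnj (v $ i) * M $$ (i, j) * u $ j))"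
    unfolding sesq_def by (rule sum2_cong) (use assms in \<open>simp add: algebra_simps\<close>)
  then show ?thesis unfolding sesq_def by (simp add: sum_distrib_left)
qed

lemma sesq_eq_sum_mult_mat_vec:
  "M \<in> carrier_mat n n \<Longrightarrow> v \<in> carrier_vec n \<Longrightarrow> sesq n M u v = (\<Sum>i<n. cnj (u $ i) * (M *\<^sub>v v) $ i)"
  unfolding sesq_def
  by (rule sum.cong)
     (simp_all add: mult_mat_vec_index sum_distrib_left mult.assoc del: index_mult_mat_vec)

lemma quad_form_eq_sesq: "M \<in> carrier_mat n n \<Longrightarrow> v \<in> carrier_vec n \<Longrightarrow> quad_form M v = sesq n M v v"
  unfolding quad_form_def scalar_prod_def by (simp add: sesq_eq_sum_mult_mat_vec atLeast0LessThan)

lemma sesq_unit_vec_left: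
  assumes "k < n"
  shows "sesq n M (unit_vec n k) v = (\<Sum>j<n. M $$ (k, j) * v $ j)"
proof -
  have "sesq n M (unit_vec n k) v = (\<Sum>i<n. if i = k then (\<Sum>j<n. M $$ (k, j) * v $ j) else 0)"
    unfolding sesq_def by (rule sum.cong) (use assms in auto)
  then show ?thesis using assms by simp
qed

lemma sesq_unit_vec_right:
  assumes "k < n"
  shows "sesq n M v (unit_vec n k) = (\<Sum>i<n. cnj (v $ i) * M $$ (i, k))"
proof -
  have "sesq n M v (unit_vec n k) = (\<Sum>i<n. \<Sum>j<n. if j = k then cnj (v $ i) * M $$ (i, k) else 0)"
    unfolding sesq_def by (rule sum2_cong) (use assms in simp)
  then show ?thesis using assms by simp
qed

lemma sesq_unit_vec:
  assumes "i < n" and "j < n"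
  shows "sesq n M (unit_vec n i) (unit_vec n j) = M $$ (i, j)"
proof -
  have "(\<Sum>l<n. M $$ (i, l) * unit_vec n j $ l) = (\<Sum>l<n. if l = j then M $$ (i, j) else 0)"
    by (rule sum.cong) (use assms in auto)
  then show ?thesis using assms by (simp add: sesq_unit_vec_left del: index_unit_vec)
qed

lemma sesq_mat_adjoint:
  assumes "A \<in> carrier_mat n n"
  shows "sesq n (mat_adjoint A) u v = cnj (sesq n A v u)"
proof -
  have "sesq n (mat_adjoint A) u v = (\<Sum>i<n. \<Sum>j<n. cnj (cnj (v $ j) * A $$ (j, i) * u $ i))"
    unfolding sesq_def by (rule sum2_cong) (use assms in \<open>simp add: algebra_simps\<close>)
  also have "\<dots> = (\<Sum>j<n. \<Sum>i<n. cnj (cnj (v $ j) * A $$ (j, i) * u $ i))"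
    by (rule sum.swap)
  finally show ?thesis unfolding sesq_def by (simp add: cnj_sum)
qed

lemma sesq_adjoint_mult:
  assumes Y: "Y \<in> carrier_mat n n" and Z: "Z \<in> carrier_mat n n"
    and u: "u \<in> carrier_vec n" and v: "v \<in> carrier_vec n"
  shows "sesq n (mat_adjoint Y * Z) u v = (\<Sum>l<n. cnj ((Y *\<^sub>v u) $ l) * (Z *\<^sub>v v) $ l)"
proof -
  define F where "F i j l = cnj (u $ i) * cnj (Y $$ (l, i)) * Z $$ (l, j) * v $ j" for i j l
  have "sesq n (mat_adjoint Y * Z) u v = (\<Sum>i<n. \<Sum>j<n. \<Sum>l<n. F i j l)"
    unfolding sesq_def
  proof (rule sum2_cong)
    fix i j assume i: "i < n" and j: "j < n"
    have "(mat_adjoint Y * Z) $$ (i, j) = (\<Sum>l<n. mat_adjoint Y $$ (i, l) * Z $$ (l, j))"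
      by (rule mult_mat_index) (use Y Z i j in simp_all)
    also have "\<dots> = (\<Sum>l<n. cnj (Y $$ (l, i)) * Z $$ (l, j))"
      by (rule sum.cong) (use Y i in simp_all)
    finally have "(mat_adjoint Y * Z) $$ (i, j) = (\<Sum>l<n. cnj (Y $$ (l, i)) * Z $$ (l, j))" .
    then show "cnj (u $ i) * (mat_adjoint Y * Z) $$ (i, j) * v $ j = (\<Sum>l<n. F i j l)"
      unfolding F_def by (simp add: sum_distrib_left sum_distrib_right mult.assoc)
  qed
  also have "\<dots> = (\<Sum>i<n. \<Sum>l<n. \<Sum>j<n. F i j l)"
    by (rule sum.cong[OF refl], rule sum.swap)
  also have "\<dots> = (\<Sum>l<n. \<Sum>i<n. \<Sum>j<n. F i j l)"
    by (rule sum.swap)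
  also have "\<dots> = (\<Sum>l<n. cnj ((Y *\<^sub>v u) $ l) * (Z *\<^sub>v v) $ l)"
  proof (rule sum.cong[OF refl])
    fix l assume "l \<in> {..<n}"
    then have "cnj ((Y *\<^sub>v u) $ l) * (Z *\<^sub>v v) $ l =
        (\<Sum>i<n. cnj (Y $$ (l, i) * u $ i)) * (\<Sum>j<n. Z $$ (l, j) * v $ j)"
      using Y Z u v by (simp add: mult_mat_vec_index cnj_sum del: index_mult_mat_vec)
    also have "\<dots> = (\<Sum>i<n. \<Sum>j<n. F i j l)"
      unfolding F_def sum_product by (simp add: mult.commute mult.left_commute)
    finally show "(\<Sum>i<n. \<Sum>j<n. F i j l) = cnj ((Y *\<^sub>v u) $ l) * (Z *\<^sub>v v) $ l" by simp
  qed
  finally show ?thesis .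
qed

lemma mat_eq_0_if_sesq_diag_eq_0:
  assumes M: "M \<in> carrier_mat n n" and diag: "\<And>v. v \<in> carrier_vec n \<Longrightarrow> sesq n M v v = 0"
  shows "M = 0\<^sub>m n n"
proof (rule eq_matI)
  fix i j assume "i < dim_row (0\<^sub>m n n)" and "j < dim_col (0\<^sub>m n n)"
  then have i: "i < n" and j: "j < n" by auto
  let ?ei = "unit_vec n i :: complex vec" and ?ej = "unit_vec n j :: complex vec"
  have "sesq n M (?ei + ?ej) (?ei + ?ej) = 0" by (simp add: diag)
  then have sym: "M $$ (i, j) + M $$ (j, i) = 0"
    using diag[of ?ei] diag[of ?ej] by (simp add: sesq_add_left sesq_add_right sesq_unit_vec i j add.commute)
  have "sesq n M (?ei + \<i> \<cdot>\<^sub>v ?ej) (?ei + \<i> \<cdot>\<^sub>v ?ej) = 0" by (simp add: diag)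
  then have "cnj \<i> * M $$ (j, i) + \<i> * M $$ (i, j) = 0"
    using diag[of ?ei] diag[of ?ej]
    by (simp add: sesq_add_left sesq_add_right sesq_smult_left sesq_smult_right sesq_unit_vec i j)
  then have "M $$ (i, j) - M $$ (j, i) = 0" by (simp add: algebra_simps)
  with sym show "M $$ (i, j) = 0\<^sub>m n n $$ (i, j)" using i j by simp
qed (use M in simp_all)

lemma linear_coeff_eq_0_if_nonneg:
  fixes \<alpha> \<beta> d :: complex
  assumes d: "Im d = 0" "Re d \<ge> 0"
    and nonneg: "\<And>t. Im (t * \<beta> + cnj t * \<alpha> + cnj t * t * d) = 0 \<and>
                      Re (t * \<beta> + cnj t * \<alpha> + cnj t * t * d) \<ge> 0"
  shows "\<alpha> = 0"
proof -
  have "Im (\<beta> + \<alpha>) = 0" and "Re \<beta> - Re \<alpha> = 0"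
    using nonneg[of 1] nonneg[of \<i>] d by simp_all
  then have \<beta>: "\<beta> = cnj \<alpha>" by (simp add: complex_eq_iff)
  \<comment> \<open>at \<open>t = -s \<alpha>\<close> the form equals \<open>s |\<alpha>|\<^sup>2 (s d - 2)\<close>, which is negative for small \<open>s > 0\<close>\<close>
  define s where "s = 1 / (Re d + 1)"
  have s: "s > 0" "s * Re d < 1" using d unfolding s_def by (simp_all add: field_simps)
  define N where "N = (Re \<alpha>)\<^sup>2 + (Im \<alpha>)\<^sup>2"
  have "Re (complex_of_real (-s) * \<alpha> * \<beta> + cnj (complex_of_real (-s) * \<alpha>) * \<alpha> +
      cnj (complex_of_real (-s) * \<alpha>) * (complex_of_real (-s) * \<alpha>) * d) = s * N * (s * Re d - 2)"
    using d unfolding \<beta> N_def by (simp add: algebra_simps power2_eq_square)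
  then have "s * N * (s * Re d - 2) \<ge> 0" using nonneg[of "complex_of_real (-s) * \<alpha>"] by simp
  moreover have "N \<ge> 0" unfolding N_def by simp
  ultimately have "N = 0" using s by (smt (verit) mult_pos_neg mult_pos_pos)
  then show ?thesis unfolding N_def by (simp add: complex_eq_iff)
qed

section \<open>Positive semidefinite and positive definite matrices\<close>

lemma psd_sesq: "psd n X \<Longrightarrow> v \<in> carrier_vec n \<Longrightarrow> Im (sesq n X v v) = 0 \<and> Re (sesq n X v v) \<ge> 0"
  unfolding psd_def using quad_form_eq_sesq by metis

lemma psd_carrier: "psd n X \<Longrightarrow> X \<in> carrier_mat n n"
  unfolding psd_def by simp

lemma psdI:
  "X \<in> carrier_mat n n \<Longrightarrow> (\<And>v. v \<in> carrier_vec n \<Longrightarrow> Im (sesq n X v v) = 0 \<and> Re (sesq n X v v) \<ge> 0) \<Longrightarrow>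
    psd n X"
  unfolding psd_def using quad_form_eq_sesq by metis

lemma psd_add: "psd n X \<Longrightarrow> psd n Y \<Longrightarrow> psd n (X + Y)"
  by (rule psdI) (auto simp: psd_carrier psd_sesq sesq_add_mat)

lemma psd_adjoint_mult:
  assumes Y: "Y \<in> carrier_mat n n"
  shows "psd n (mat_adjoint Y * Y)"
proof (rule psdI)
  fix v :: "complex vec" assume v: "v \<in> carrier_vec n"
  show "Im (sesq n (mat_adjoint Y * Y) v v) = 0 \<and> Re (sesq n (mat_adjoint Y * Y) v v) \<ge> 0"
    unfolding sesq_adjoint_mult[OF Y Y v v] by (simp add: sum_nonneg)
qed (use Y in simp)

lemma psd_hermitian:
  assumes "psd n X"
  shows "mat_adjoint X = X"
proof -
  have X: "X \<in> carrier_mat n n" using assms psd_carrier by blast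
  have "mat_adjoint X - X = 0\<^sub>m n n"
  proof (rule mat_eq_0_if_sesq_diag_eq_0)
    show "mat_adjoint X - X \<in> carrier_mat n n" using X by (metis mat_adjoint_carrier minus_carrier_mat)
    fix v :: "complex vec" assume "v \<in> carrier_vec n"
    then have "Im (sesq n X v v) = 0" using psd_sesq[OF assms] by simp
    then show "sesq n (mat_adjoint X - X) v v = 0"
      using X by (simp add: sesq_minus_mat sesq_mat_adjoint complex_eq_iff)
  qed
  then show ?thesis using X by (metis mat_adjoint_carrier minus_eq_0_imp_eq)
qed

lemma psd_index_cnj: "psd n X \<Longrightarrow> i < n \<Longrightarrow> j < n \<Longrightarrow> X $$ (i, j) = cnj (X $$ (j, i))"
  by (metis psd_hermitian psd_carrier index_mat_adjoint carrier_matD(1) carrier_matD(2))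

lemma psd_col_eq_0_if_diag_eq_0:
  assumes X: "psd n X" and k: "k < n" and j: "j < n" and diag: "X $$ (k, k) = 0"
  shows "X $$ (j, k) = 0"
proof (rule linear_coeff_eq_0_if_nonneg)
  let ?ek = "unit_vec n k :: complex vec" and ?ej = "unit_vec n j :: complex vec"
  show "Im (X $$ (j, j)) = 0" "Re (X $$ (j, j)) \<ge> 0"
    using psd_sesq[OF X, of ?ej] sesq_unit_vec[OF j j] by simp_all
  fix t
  have "sesq n X (?ek + t \<cdot>\<^sub>v ?ej) (?ek + t \<cdot>\<^sub>v ?ej) =
      t * X $$ (k, j) + cnj t * X $$ (j, k) + cnj t * t * X $$ (j, j)"
    using k j diag
    by (simp add: sesq_add_left sesq_add_right sesq_smult_left sesq_smult_right sesq_unit_vec algebra_simps)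
  then show "Im (t * X $$ (k, j) + cnj t * X $$ (j, k) + cnj t * t * X $$ (j, j)) = 0 \<and>
      Re (t * X $$ (k, j) + cnj t * X $$ (j, k) + cnj t * t * X $$ (j, j)) \<ge> 0"
    using psd_sesq[OF X, of "?ek + t \<cdot>\<^sub>v ?ej"] by simp
qed

definition rank_one :: "nat \<Rightarrow> complex vec \<Rightarrow> complex mat" where
  "rank_one n x = mat n n (\<lambda>(i, j). x $ i * cnj (x $ j))"

lemma dim_rank_one [simp]: "dim_row (rank_one n x) = n" "dim_col (rank_one n x) = n"
  unfolding rank_one_def by simp_all

lemma rank_one_carrier [simp]: "rank_one n x \<in> carrier_mat n n"
  unfolding carrier_mat_def by simp

lemma index_rank_one [simp]: "i < n \<Longrightarrow> j < n \<Longrightarrow> rank_one n x $$ (i, j) = x $ i * cnj (x $ j)"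
  unfolding rank_one_def by simp

lemma rank_one_smult:
  "x \<in> carrier_vec n \<Longrightarrow> rank_one n (c \<cdot>\<^sub>v x) = (c * cnj c) \<cdot>\<^sub>m rank_one n x"
  by (rule eq_matI) (simp_all add: rank_one_def)

lemma rank_one_eq_adjoint_mult: "\<exists>Y \<in> carrier_mat n n. rank_one n x = mat_adjoint Y * Y"
proof
  define Y where "Y = mat n n (\<lambda>(i, j). if i = 0 then cnj (x $ j) else 0)"
  show Y: "Y \<in> carrier_mat n n" unfolding Y_def by simp
  show "rank_one n x = mat_adjoint Y * Y"
  proof (rule eq_matI)
    fix i j assume "i < dim_row (mat_adjoint Y * Y)" and "j < dim_col (mat_adjoint Y * Y)"
    then have i: "i < n" and j: "j < n" using Y by auto
    have "(mat_adjoint Y * Y) $$ (i, j) = (\<Sum>l<n. mat_adjoint Y $$ (i, l) * Y $$ (l, j))"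
      by (rule mult_mat_index) (use Y i j in simp_all)
    also have "\<dots> = (\<Sum>l<n. if l = 0 then x $ i * cnj (x $ j) else 0)"
      by (rule sum.cong) (use Y i j in \<open>simp_all add: Y_def\<close>)
    also have "\<dots> = x $ i * cnj (x $ j)" using i by simp
    finally show "rank_one n x $$ (i, j) = (mat_adjoint Y * Y) $$ (i, j)" using i j by simp
  qed (use Y in simp_all)
qed

lemma smult_rank_one_eq_adjoint_mult:
  assumes x: "x \<in> carrier_vec n" and r: "r > 0"
  shows "\<exists>Y \<in> carrier_mat n n. (1 / complex_of_real r) \<cdot>\<^sub>m rank_one n x = mat_adjoint Y * Y"
proof -
  have "(1 / complex_of_real (sqrt r))\<^sup>2 = 1 / complex_of_real r"
    using r by (simp add: power_divide flip: of_real_power)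
  then have "(1 / complex_of_real r) \<cdot>\<^sub>m rank_one n x = rank_one n (complex_of_real (1 / sqrt r) \<cdot>\<^sub>v x)"
    using x by (simp add: rank_one_smult power2_eq_square[symmetric])
  then show ?thesis using rank_one_eq_adjoint_mult by metis
qed

lemma psd_rank_one: "psd n (rank_one n x)"
  using rank_one_eq_adjoint_mult psd_adjoint_mult by metis

lemma sesq_rank_one:
  "sesq n (rank_one n x) v v = (\<Sum>i<n. cnj (v $ i) * x $ i) * (\<Sum>j<n. cnj (x $ j) * v $ j)"
proof -
  have "sesq n (rank_one n x) v v = (\<Sum>i<n. \<Sum>j<n. (cnj (v $ i) * x $ i) * (cnj (x $ j) * v $ j))"
    unfolding sesq_def by (rule sum2_cong) (simp add: mult.assoc)
  then show ?thesis by (simp add: sum_product)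
qed

lemma rank_one_neq_0:
  assumes x: "x \<in> carrier_vec n" and "x \<noteq> 0\<^sub>v n"
  shows "rank_one n x \<noteq> 0\<^sub>m n n"
proof
  assume z: "rank_one n x = 0\<^sub>m n n"
  have "x = 0\<^sub>v n"
  proof (rule eq_vecI)
    fix i assume "i < dim_vec (0\<^sub>v n :: complex vec)"
    then have i: "i < n" by simp
    then have "x $ i * cnj (x $ i) = 0" using z index_rank_one[OF i i, of x] by simp
    then show "x $ i = 0\<^sub>v n $ i" using i by simp
  qed (use x in simp)
  with \<open>x \<noteq> 0\<^sub>v n\<close> show False by simp
qed

lemma rank_one_mult_eq_0:
  assumes c: "c \<in> carrier_mat n n" and x: "x \<in> carrier_vec n" and z: "mat_adjoint c *\<^sub>v x = 0\<^sub>v n"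
  shows "rank_one n x * c = 0\<^sub>m n n"
proof (rule eq_matI)
  fix i j assume "i < dim_row (0\<^sub>m n n :: complex mat)" and "j < dim_col (0\<^sub>m n n :: complex mat)"
  then have i: "i < n" and j: "j < n" by simp_all
  have "(mat_adjoint c *\<^sub>v x) $ j = (\<Sum>l<n. mat_adjoint c $$ (j, l) * x $ l)"
    by (rule mult_mat_vec_index) (use c x j in simp_all)
  also have "\<dots> = (\<Sum>l<n. cnj (c $$ (l, j)) * x $ l)"
    by (rule sum.cong) (use c j in simp_all)
  finally have "cnj (\<Sum>l<n. cnj (c $$ (l, j)) * x $ l) = 0" using z j by simp
  then have "(\<Sum>l<n. cnj (x $ l) * c $$ (l, j)) = 0" by (simp add: cnj_sum mult.commute)
  moreover have "(rank_one n x * c) $$ (i, j) = (\<Sum>l<n. rank_one n x $$ (i, l) * c $$ (l, j))"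
    by (rule mult_mat_index) (use c i j in simp_all)
  then have "(rank_one n x * c) $$ (i, j) = x $ i * (\<Sum>l<n. cnj (x $ l) * c $$ (l, j))"
    using i by (simp add: sum_distrib_left mult.assoc)
  ultimately show "(rank_one n x * c) $$ (i, j) = 0\<^sub>m n n $$ (i, j)" using i j by simp
qed (use c in simp_all)

text \<open>Subtracting the rank-one matrix spanned by column \<open>k\<close> is the first step of a
  Cholesky factorisation; it clears row and column \<open>k\<close> and keeps the matrix positive.\<close>

lemma psd_schur_complement:
  assumes X: "psd n X" and k: "k < n" and Xkk: "X $$ (k, k) \<noteq> 0"
  shows "psd n (X - (1 / X $$ (k, k)) \<cdot>\<^sub>m rank_one n (col X k))"
proof (rule psdI)
  have Xc: "X \<in> carrier_mat n n" using psd_carrier[OF X] .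
  show "X - (1 / X $$ (k, k)) \<cdot>\<^sub>m rank_one n (col X k) \<in> carrier_mat n n"
    by (simp add: minus_carrier_mat)
  fix v :: "complex vec" assume v: "v \<in> carrier_vec n"
  let ?ek = "unit_vec n k"
  define s where "s = sesq n X ?ek v"
  define t where "t = s / X $$ (k, k)"
  have real_kk: "cnj (X $$ (k, k)) = X $$ (k, k)" using psd_index_cnj[OF X k k] by simp
  have s_cnj: "sesq n X v ?ek = cnj s"
    unfolding s_def using sesq_mat_adjoint[OF Xc, of v ?ek] psd_hermitian[OF X] by simp
  have "(\<Sum>i<n. cnj (v $ i) * col X k $ i) = cnj s"
    unfolding s_cnj[symmetric] sesq_unit_vec_right[OF k] by (rule sum.cong) (use Xc k in simp_all)
  moreover have "(\<Sum>j<n. cnj (col X k $ j) * v $ j) = s"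
    unfolding s_def sesq_unit_vec_left[OF k] by (rule sum.cong) (use Xc k X in \<open>simp_all add: psd_index_cnj[of n X k]\<close>)
  ultimately have "sesq n (X - (1 / X $$ (k, k)) \<cdot>\<^sub>m rank_one n (col X k)) v v =
      sesq n X v v - cnj s * s / X $$ (k, k)"
    using Xc by (simp add: sesq_minus_mat sesq_smult_mat sesq_rank_one)
  also have "\<dots> = sesq n X (v + (- t) \<cdot>\<^sub>v ?ek) (v + (- t) \<cdot>\<^sub>v ?ek)"
    using v k Xkk real_kk
    by (simp add: sesq_add_left sesq_add_right sesq_smult_left sesq_smult_right sesq_unit_vec s_cnj
        s_def[symmetric] t_def field_simps)
  finally show "Im (sesq n (X - (1 / X $$ (k, k)) \<cdot>\<^sub>m rank_one n (col X k)) v v) = 0 \<and>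
      Re (sesq n (X - (1 / X $$ (k, k)) \<cdot>\<^sub>m rank_one n (col X k)) v v) \<ge> 0"
    using psd_sesq[OF X, of "v + (- t) \<cdot>\<^sub>v ?ek"] v by simp
qed

lemma psd_eq_add_gram:
  assumes X: "psd n X" and k: "k < n" and rows: "\<forall>i<k. \<forall>j<n. X $$ (i, j) = 0"
  obtains X' Y where "psd n X'" and "\<forall>i<Suc k. \<forall>j<n. X' $$ (i, j) = 0"
    and "Y \<in> carrier_mat n n" and "X = X' + mat_adjoint Y * Y"
proof -
  have Xc: "X \<in> carrier_mat n n" using psd_carrier[OF X] .
  show ?thesis
  proof (cases "X $$ (k, k) = 0")
    case True
    have "X $$ (k, j) = 0" if "j < n" for j
      using psd_index_cnj[OF X k that] psd_col_eq_0_if_diag_eq_0[OF X k that True] by simp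
    then have "\<forall>i<Suc k. \<forall>j<n. X $$ (i, j) = 0" using rows less_Suc_eq by auto
    moreover have "X = X + mat_adjoint (0\<^sub>m n n) * 0\<^sub>m n n" by (rule eq_matI) (use Xc in simp_all)
    ultimately show ?thesis using that[of X "0\<^sub>m n n"] X by simp
  next
    case False
    define R where "R = (1 / X $$ (k, k)) \<cdot>\<^sub>m rank_one n (col X k)"
    have "(X - R) $$ (i, j) = X $$ (i, j) - X $$ (i, k) * X $$ (k, j) / X $$ (k, k)"
      if "i < n" "j < n" for i j
      using that Xc k psd_index_cnj[OF X k \<open>j < n\<close>] unfolding R_def by simp
    then have "\<forall>i<Suc k. \<forall>j<n. (X - R) $$ (i, j) = 0"
      using rows k False by (auto simp: less_Suc_eq)
    moreover have "psd n (X - R)"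
      unfolding R_def by (rule psd_schur_complement[OF X k False])
    moreover obtain Y where "Y \<in> carrier_mat n n" and "R = mat_adjoint Y * Y"
    proof -
      define r where "r = Re (X $$ (k, k))"
      have "Im (X $$ (k, k)) = 0" "Re (X $$ (k, k)) \<ge> 0"
        using psd_sesq[OF X, of "unit_vec n k"] sesq_unit_vec[OF k k] by simp_all
      then have "r > 0" and "X $$ (k, k) = complex_of_real r"
        using False unfolding r_def by (auto simp: complex_eq_iff)
      then show ?thesis
        using smult_rank_one_eq_adjoint_mult[of "col X k" n r] Xc k that unfolding R_def by auto
    qed
    moreover have "X = (X - R) + R" by (rule eq_matI) (use Xc in \<open>simp_all add: R_def\<close>)
    ultimately show ?thesis using that by metis
  qed
qed

lemma psd_induct [consumes 1, case_names add gram]: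
  assumes "psd n X"
    and add: "\<And>A B. A \<in> carrier_mat n n \<Longrightarrow> B \<in> carrier_mat n n \<Longrightarrow> P A \<Longrightarrow> P B \<Longrightarrow> P (A + B)"
    and gram: "\<And>Y. Y \<in> carrier_mat n n \<Longrightarrow> P (mat_adjoint Y * Y)"
  shows "P X"
proof -
  have "P X" if "k \<le> n" and "psd n X" and "\<forall>i<k. \<forall>j<n. X $$ (i, j) = 0" for k X
    using that
  proof (induction k arbitrary: X rule: inc_induct)
    case base
    then have "X = mat_adjoint (0\<^sub>m n n) * 0\<^sub>m n n"
      by (intro eq_matI) (auto dest!: psd_carrier)
    then show ?case using gram[of "0\<^sub>m n n"] by simp
  next
    case (step k)
    then obtain X' Y where X': "psd n X'" "\<forall>i<Suc k. \<forall>j<n. X' $$ (i, j) = 0"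
      and Y: "Y \<in> carrier_mat n n" and X: "X = X' + mat_adjoint Y * Y"
      by (metis psd_eq_add_gram)
    have "P X'" using step.IH X' by blast
    then show ?case unfolding X using add[OF psd_carrier[OF X'(1)] _ _ gram[OF Y]] Y by simp
  qed
  from this[of 0] show ?thesis using assms(1) by simp
qed

lemma pd_carrier: "pd n A \<Longrightarrow> A \<in> carrier_mat n n"
  unfolding pd_def by simp

lemma pd_sesq:
  assumes "pd n A" and "v \<in> carrier_vec n" and "v \<noteq> 0\<^sub>v n"
  shows "Re (sesq n A v v) > 0"
  using assms quad_form_eq_sesq[of A n v] unfolding pd_def by auto

lemma not_pd_zero:
  assumes "0 < n"
  shows "\<not> pd n (0\<^sub>m n n)"
proof
  assume "pd n (0\<^sub>m n n)"
  from pd_sesq[OF this _ unit_vec_nonzero[OF assms]] show False by simp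
qed

lemma pd_adjoint_mult_vec_eq_0:
  assumes A: "pd n A" and u: "u \<in> carrier_vec n" and z: "mat_adjoint A *\<^sub>v u = 0\<^sub>v n"
  shows "u = 0\<^sub>v n"
proof (rule ccontr)
  assume "u \<noteq> 0\<^sub>v n"
  then have "Re (sesq n A u u) > 0" using pd_sesq[OF A u] by simp
  moreover have "cnj (sesq n A u u) = sesq n (mat_adjoint A) u u"
    using sesq_mat_adjoint[OF pd_carrier[OF A]] by simp
  moreover have "sesq n (mat_adjoint A) u u = (\<Sum>i<n. cnj (u $ i) * (mat_adjoint A *\<^sub>v u) $ i)"
    by (rule sesq_eq_sum_mult_mat_vec) (use pd_carrier[OF A] u in simp_all)
  ultimately show False unfolding z by simp
qed

lemma pd_adjoint_mult_eq_0:
  assumes A: "pd n A" and B: "B \<in> carrier_mat n n" and z: "mat_adjoint A * B = 0\<^sub>m n n"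
  shows "B = 0\<^sub>m n n"
proof (rule eq_matI)
  fix i j assume "i < dim_row (0\<^sub>m n n :: complex mat)" and "j < dim_col (0\<^sub>m n n :: complex mat)"
  then have i: "i < n" and j: "j < n" by simp_all
  have col: "col B j \<in> carrier_vec n" using B by (simp add: carrier_vecI)
  have "mat_adjoint A *\<^sub>v col B j = col (mat_adjoint A * B) j"
    by (rule col_mult2[OF mat_adjoint_carrier[OF pd_carrier[OF A]] B j, symmetric])
  also have "\<dots> = 0\<^sub>v n" unfolding z using j by simp
  finally have "col B j = 0\<^sub>v n" using pd_adjoint_mult_vec_eq_0[OF A col] by simp
  then have "col B j $ i = 0" using i by simp
  then show "B $$ (i, j) = 0\<^sub>m n n $$ (i, j)" using B i j by simp
qed (use B in simp_all)

section \<open>Schwarz maps\<close>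

lemma lin_map_carrier: "lin_map n f \<Longrightarrow> a \<in> carrier_mat n n \<Longrightarrow> f a \<in> carrier_mat n n"
  unfolding lin_map_def by blast

lemma lin_map_add:
  "lin_map n f \<Longrightarrow> a \<in> carrier_mat n n \<Longrightarrow> b \<in> carrier_mat n n \<Longrightarrow> f (a + b) = f a + f b"
  unfolding lin_map_def by blast

lemma lin_map_smult: "lin_map n f \<Longrightarrow> a \<in> carrier_mat n n \<Longrightarrow> f (c \<cdot>\<^sub>m a) = c \<cdot>\<^sub>m f a"
  unfolding lin_map_def by blast

lemma lin_map_zero:
  assumes f: "lin_map n f"
  shows "f (0\<^sub>m n n) = 0\<^sub>m n n"
proof -
  have "0\<^sub>m n n = (0 :: complex) \<cdot>\<^sub>m 0\<^sub>m n n" by (rule eq_matI) simp_all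
  then have "f (0\<^sub>m n n) = 0 \<cdot>\<^sub>m f (0\<^sub>m n n)" using lin_map_smult[OF f] by (metis zero_carrier_mat)
  also have "\<dots> = 0\<^sub>m n n" by (rule eq_matI) (use lin_map_carrier[OF f zero_carrier_mat] in simp_all)
  finally show ?thesis .
qed

lemma lin_map_id: "lin_map n id"
  unfolding lin_map_def by simp

lemma lin_map_comp: "lin_map n f \<Longrightarrow> lin_map n g \<Longrightarrow> lin_map n (f \<circ> g)"
  unfolding lin_map_def comp_def by metis

lemma sesq_lin_map_adjoint_mult_expand:
  assumes f: "lin_map n f" and B: "B \<in> carrier_mat n n" and X: "X \<in> carrier_mat n n"
  shows "sesq n (f (mat_adjoint (B + t \<cdot>\<^sub>m X) * (B + t \<cdot>\<^sub>m X))) v v =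
    sesq n (f (mat_adjoint B * B)) v v + t * sesq n (f (mat_adjoint B * X)) v v
    + cnj t * sesq n (f (mat_adjoint X * B)) v v + cnj t * t * sesq n (f (mat_adjoint X * X)) v v"
  unfolding adjoint_mult_expand[OF B X] using B X lin_map_carrier[OF f]
  by (simp add: lin_map_add[OF f] lin_map_smult[OF f] sesq_add_mat sesq_smult_mat mult.assoc)

definition schwarz_map :: "nat \<Rightarrow> (complex mat \<Rightarrow> complex mat) \<Rightarrow> bool" where
  "schwarz_map n f \<longleftrightarrow> lin_map n f \<and>
     (\<forall>a \<in> carrier_mat n n. psd n (f (mat_adjoint a * a) - mat_adjoint (f a) * f a))"

lemma unital_schwarz_iff: "unital_schwarz n f \<longleftrightarrow> schwarz_map n f \<and> f (1\<^sub>m n) = 1\<^sub>m n"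
  unfolding unital_schwarz_def schwarz_map_def by blast

lemma schwarz_map_lin_map: "schwarz_map n f \<Longrightarrow> lin_map n f"
  unfolding schwarz_map_def by blast

lemma schwarz_map_sesq:
  assumes f: "schwarz_map n f" and a: "a \<in> carrier_mat n n" and v: "v \<in> carrier_vec n"
  shows "Im (sesq n (f (mat_adjoint a * a)) v v - sesq n (mat_adjoint (f a) * f a) v v) = 0 \<and>
         Re (sesq n (f (mat_adjoint a * a)) v v - sesq n (mat_adjoint (f a) * f a) v v) \<ge> 0"
proof -
  have lin: "lin_map n f" using schwarz_map_lin_map[OF f] .
  have "psd n (f (mat_adjoint a * a) - mat_adjoint (f a) * f a)" using f a unfolding schwarz_map_def by blast
  from psd_sesq[OF this v] show ?thesis
    using a lin_map_carrier[OF lin] by (simp add: sesq_minus_mat)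
qed

lemma psd_schwarz_map_adjoint_mult:
  assumes f: "schwarz_map n f" and Y: "Y \<in> carrier_mat n n"
  shows "psd n (f (mat_adjoint Y * Y))"
proof (rule psdI)
  have lin: "lin_map n f" using schwarz_map_lin_map[OF f] .
  show "f (mat_adjoint Y * Y) \<in> carrier_mat n n" using lin_map_carrier[OF lin] Y by simp
  fix v :: "complex vec" assume v: "v \<in> carrier_vec n"
  show "Im (sesq n (f (mat_adjoint Y * Y)) v v) = 0 \<and> Re (sesq n (f (mat_adjoint Y * Y)) v v) \<ge> 0"
    using schwarz_map_sesq[OF f Y v] psd_sesq[OF psd_adjoint_mult[OF lin_map_carrier[OF lin Y]] v]
    by simp
qed

lemma schwarz_map_psd:
  assumes f: "schwarz_map n f" and "psd n X"
  shows "psd n (f X)"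
  using \<open>psd n X\<close>
proof (induction rule: psd_induct)
  case (add A B)
  then show ?case using lin_map_add[OF schwarz_map_lin_map[OF f]] psd_add by simp
next
  case (gram Y)
  then show ?case by (rule psd_schwarz_map_adjoint_mult[OF f])
qed

text \<open>Choi's argument: the Schwarz inequality for \<open>b + t x\<close> is a nonnegative quadratic
  polynomial in \<open>t\<close> without constant term, so its linear coefficient vanishes.\<close>

lemma schwarz_map_mult_right:
  assumes f: "schwarz_map n f" and b: "b \<in> carrier_mat n n"
    and mult: "f (mat_adjoint b * b) = mat_adjoint (f b) * f b" and x: "x \<in> carrier_mat n n"
  shows "f (mat_adjoint x * b) = mat_adjoint (f x) * f b"
proof -
  have lin: "lin_map n f" using schwarz_map_lin_map[OF f] .
  have fb: "f b \<in> carrier_mat n n" and fx: "f x \<in> carrier_mat n n"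
    using lin_map_carrier[OF lin] b x by auto
  define gap where "gap v y z = sesq n (f (mat_adjoint y * z)) v v - sesq n (mat_adjoint (f y) * f z) v v"
    for v y z
  have gap_zero: "gap v x b = 0" if v: "v \<in> carrier_vec n" for v
  proof (rule linear_coeff_eq_0_if_nonneg)
    show "Im (gap v x x) = 0" "Re (gap v x x) \<ge> 0"
      using schwarz_map_sesq[OF f x v] unfolding gap_def by simp_all
    fix t
    have f_lin: "f (b + t \<cdot>\<^sub>m x) = f b + t \<cdot>\<^sub>m f x"
      using lin_map_add[OF lin b] lin_map_smult[OF lin x] x by simp
    have "gap v (b + t \<cdot>\<^sub>m x) (b + t \<cdot>\<^sub>m x) = t * gap v b x + cnj t * gap v x b + cnj t * t * gap v x x"
      unfolding gap_def f_lin sesq_lin_map_adjoint_mult_expand[OF lin b x]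
        sesq_lin_map_adjoint_mult_expand[OF lin_map_id fb fx, simplified] mult
      by (simp add: algebra_simps)
    then show "Im (t * gap v b x + cnj t * gap v x b + cnj t * t * gap v x x) = 0 \<and>
        Re (t * gap v b x + cnj t * gap v x b + cnj t * t * gap v x x) \<ge> 0"
      using schwarz_map_sesq[OF f _ v, of "b + t \<cdot>\<^sub>m x"] x unfolding gap_def by simp
  qed
  have fxb: "f (mat_adjoint x * b) \<in> carrier_mat n n" using lin_map_carrier[OF lin] b x by simp
  have "f (mat_adjoint x * b) - mat_adjoint (f x) * f b = 0\<^sub>m n n"
  proof (rule mat_eq_0_if_sesq_diag_eq_0)
    show "f (mat_adjoint x * b) - mat_adjoint (f x) * f b \<in> carrier_mat n n"
      using fx fb by (simp add: minus_carrier_mat)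
    fix v :: "complex vec" assume "v \<in> carrier_vec n"
    then show "sesq n (f (mat_adjoint x * b) - mat_adjoint (f x) * f b) v v = 0"
      using gap_zero fx fb fxb by (simp add: gap_def sesq_minus_mat)
  qed
  then show ?thesis by (rule minus_eq_0_imp_eq) (use fx fb fxb in simp_all)
qed

lemma schwarz_map_id: "schwarz_map n id"
  unfolding schwarz_map_def
proof (intro conjI lin_map_id ballI)
  fix a :: "complex mat" assume "a \<in> carrier_mat n n"
  then have "id (mat_adjoint a * a) - mat_adjoint (id a) * id a = 0\<^sub>m n n"
    by (intro eq_matI) auto
  then show "psd n (id (mat_adjoint a * a) - mat_adjoint (id a) * id a)"
    using psd_adjoint_mult[of "0\<^sub>m n n" n] by simp
qed

lemma schwarz_map_comp:
  assumes f: "schwarz_map n f" and g: "schwarz_map n g"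
  shows "schwarz_map n (f \<circ> g)"
  unfolding schwarz_map_def
proof (intro conjI ballI)
  have lf: "lin_map n f" and lg: "lin_map n g" using f g by (simp_all add: schwarz_map_lin_map)
  then show "lin_map n (f \<circ> g)" by (rule lin_map_comp)
  fix a :: "complex mat" assume a: "a \<in> carrier_mat n n"
  define b where "b = g a"
  define gap where "gap = g (mat_adjoint a * a) - mat_adjoint b * b"
  have b: "b \<in> carrier_mat n n" and bb: "mat_adjoint b * b \<in> carrier_mat n n"
    and gaa: "g (mat_adjoint a * a) \<in> carrier_mat n n"
    unfolding b_def using a lin_map_carrier[OF lg] by simp_all
  have gap: "gap \<in> carrier_mat n n" unfolding gap_def using bb by (rule minus_carrier_mat)
  have "g (mat_adjoint a * a) = gap + mat_adjoint b * b"
    unfolding gap_def by (rule eq_matI) (use gaa bb b in simp_all)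
  then have split: "(f \<circ> g) (mat_adjoint a * a) = f gap + f (mat_adjoint b * b)"
    using lin_map_add[OF lf gap bb] by simp
  have psd_gap: "psd n (f gap)"
    using g a unfolding schwarz_map_def gap_def b_def by (blast intro: schwarz_map_psd[OF f])
  have fgap: "f gap \<in> carrier_mat n n" and fbb: "f (mat_adjoint b * b) \<in> carrier_mat n n"
    and fb: "f b \<in> carrier_mat n n"
    using lin_map_carrier[OF lf] gap bb b by simp_all
  show "psd n ((f \<circ> g) (mat_adjoint a * a) - mat_adjoint ((f \<circ> g) a) * (f \<circ> g) a)"
  proof (rule psdI)
    show "(f \<circ> g) (mat_adjoint a * a) - mat_adjoint ((f \<circ> g) a) * (f \<circ> g) a \<in> carrier_mat n n"
      unfolding split using fgap fbb fb by (simp add: b_def[symmetric] minus_carrier_mat)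
    fix v :: "complex vec" assume v: "v \<in> carrier_vec n"
    have "sesq n ((f \<circ> g) (mat_adjoint a * a) - mat_adjoint ((f \<circ> g) a) * (f \<circ> g) a) v v =
        sesq n (f gap) v v + (sesq n (f (mat_adjoint b * b)) v v - sesq n (mat_adjoint (f b) * f b) v v)"
      unfolding split using fgap fbb fb by (simp add: b_def[symmetric] sesq_minus_mat sesq_add_mat)
    then show "Im (sesq n ((f \<circ> g) (mat_adjoint a * a) - mat_adjoint ((f \<circ> g) a) * (f \<circ> g) a) v v) = 0 \<and>
        Re (sesq n ((f \<circ> g) (mat_adjoint a * a) - mat_adjoint ((f \<circ> g) a) * (f \<circ> g) a) v v) \<ge> 0"
      using psd_sesq[OF psd_gap v] schwarz_map_sesq[OF f b v] by simp
  qed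
qed

lemma schwarz_map_funpow: "schwarz_map n f \<Longrightarrow> schwarz_map n (f ^^ k)"
  by (induction k) (simp_all add: schwarz_map_id schwarz_map_comp)

lemma unital_schwarz_funpow:
  assumes "unital_schwarz n f"
  shows "unital_schwarz n (f ^^ k)"
proof -
  have "(f ^^ k) (1\<^sub>m n) = 1\<^sub>m n" using assms unfolding unital_schwarz_iff by (induction k) simp_all
  then show ?thesis using assms schwarz_map_funpow unfolding unital_schwarz_iff by blast
qed

section \<open>Multiplicative domains of primitive maps\<close>

definition strictly_positive :: "nat \<Rightarrow> (complex mat \<Rightarrow> complex mat) \<Rightarrow> bool" where
  "strictly_positive n f \<longleftrightarrow> (\<forall>P. psd n P \<and> P \<noteq> 0\<^sub>m n n \<longrightarrow> pd n (f P))"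

lemma primitive_iff: "primitive n f \<longleftrightarrow> (\<exists>N. strictly_positive n (f ^^ N))"
  unfolding primitive_def strictly_positive_def by blast

lemma not_strictly_positive_id:
  assumes "2 \<le> n"
  shows "\<not> strictly_positive n id"
proof
  assume "strictly_positive n id"
  moreover have "rank_one n (unit_vec n 0) \<noteq> 0\<^sub>m n n"
    using assms by (intro rank_one_neq_0) simp_all
  ultimately have "pd n (rank_one n (unit_vec n 0))"
    unfolding strictly_positive_def using psd_rank_one by simp
  from pd_sesq[OF this _ unit_vec_nonzero] have "Re (sesq n (rank_one n (unit_vec n 0)) (unit_vec n 1) (unit_vec n 1)) > 0"
    using assms by simp
  moreover have "sesq n (rank_one n (unit_vec n 0)) (unit_vec n 1) (unit_vec n 1) = 0"
    using assms by (simp add: sesq_unit_vec)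
  ultimately show False by simp
qed

lemma strictly_positive_psd_eq_0:
  assumes "strictly_positive n f" and "0 < n" and "psd n P" and "f P = 0\<^sub>m n n"
  shows "P = 0\<^sub>m n n"
  using assms not_pd_zero unfolding strictly_positive_def by metis

lemma mult_right_add_smult:
  assumes f: "lin_map n f" and b1: "b1 \<in> carrier_mat n n" and b2: "b2 \<in> carrier_mat n n"
    and mult1: "\<And>x. x \<in> carrier_mat n n \<Longrightarrow> f (mat_adjoint x * b1) = mat_adjoint (f x) * f b1"
    and mult2: "\<And>x. x \<in> carrier_mat n n \<Longrightarrow> f (mat_adjoint x * b2) = mat_adjoint (f x) * f b2"
    and x: "x \<in> carrier_mat n n"
  shows "f (mat_adjoint x * (b1 + k \<cdot>\<^sub>m b2)) = mat_adjoint (f x) * f (b1 + k \<cdot>\<^sub>m b2)"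
proof -
  have ax: "mat_adjoint x \<in> carrier_mat n n" and kb2: "k \<cdot>\<^sub>m b2 \<in> carrier_mat n n"
    and afx: "mat_adjoint (f x) \<in> carrier_mat n n" and fb1: "f b1 \<in> carrier_mat n n"
    and fb2: "f b2 \<in> carrier_mat n n"
    using x b1 b2 lin_map_carrier[OF f] by simp_all
  have "mat_adjoint x * (b1 + k \<cdot>\<^sub>m b2) = mat_adjoint x * b1 + k \<cdot>\<^sub>m (mat_adjoint x * b2)"
    using mult_add_distrib_mat[OF ax b1 kb2] mult_smult_distrib[OF ax b2] by simp
  then have "f (mat_adjoint x * (b1 + k \<cdot>\<^sub>m b2)) = f (mat_adjoint x * b1) + k \<cdot>\<^sub>m f (mat_adjoint x * b2)"
    using lin_map_add[OF f] lin_map_smult[OF f] ax b1 b2 by simp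
  also have "\<dots> = mat_adjoint (f x) * f b1 + k \<cdot>\<^sub>m (mat_adjoint (f x) * f b2)"
    using mult1[OF x] mult2[OF x] by simp
  also have "\<dots> = mat_adjoint (f x) * (f b1 + k \<cdot>\<^sub>m f b2)"
    using mult_add_distrib_mat[OF afx fb1] mult_smult_distrib[OF afx fb2] fb2 by simp
  also have "f b1 + k \<cdot>\<^sub>m f b2 = f (b1 + k \<cdot>\<^sub>m b2)"
    using lin_map_add[OF f b1 kb2] lin_map_smult[OF f b2] by simp
  finally show ?thesis .
qed

lemma unital_schwarz_mult_right_shift:
  assumes f: "unital_schwarz n f" and a: "a \<in> carrier_mat n n"
    and mult: "f (mat_adjoint a * a) = mat_adjoint (f a) * f a" and x: "x \<in> carrier_mat n n"
  shows "f (mat_adjoint x * (a + k \<cdot>\<^sub>m 1\<^sub>m n)) = mat_adjoint (f x) * f (a + k \<cdot>\<^sub>m 1\<^sub>m n)"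
proof -
  have S: "schwarz_map n f" and u: "f (1\<^sub>m n) = 1\<^sub>m n" using f unfolding unital_schwarz_iff by auto
  show ?thesis
  proof (rule mult_right_add_smult[OF schwarz_map_lin_map[OF S] a one_carrier_mat _ _ x])
    show "f (mat_adjoint y * a) = mat_adjoint (f y) * f a" if "y \<in> carrier_mat n n" for y
      by (rule schwarz_map_mult_right[OF S a mult that])
    show "f (mat_adjoint y * 1\<^sub>m n) = mat_adjoint (f y) * f (1\<^sub>m n)" if "y \<in> carrier_mat n n" for y
      by (rule schwarz_map_mult_right[OF S one_carrier_mat _ that]) (simp add: u)
  qed
qed

lemma strictly_positive_annihilated_eq_0:
  assumes lin: "lin_map n f" and pos: "strictly_positive n f" and c: "c \<in> carrier_mat n n"
    and mult: "\<And>x. x \<in> carrier_mat n n \<Longrightarrow> f (mat_adjoint x * c) = mat_adjoint (f x) * f c"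
    and P: "psd n P" "P \<noteq> 0\<^sub>m n n" and Pc: "P * c = 0\<^sub>m n n"
  shows "f c = 0\<^sub>m n n"
proof (rule pd_adjoint_mult_eq_0)
  show "pd n (f P)" using pos P unfolding strictly_positive_def by blast
  show "f c \<in> carrier_mat n n" using lin_map_carrier[OF lin c] .
  have "mat_adjoint (f P) * f c = f (mat_adjoint P * c)" using mult[OF psd_carrier[OF P(1)]] by simp
  also have "\<dots> = 0\<^sub>m n n" unfolding psd_hermitian[OF P(1)] Pc by (rule lin_map_zero[OF lin])
  finally show "mat_adjoint (f P) * f c = 0\<^sub>m n n" .
qed

lemma strictly_positive_mult_domain_scalar:
  assumes f: "unital_schwarz n f" and pos: "strictly_positive n f" and a: "a \<in> mult_domain n f"
  shows "\<exists>\<mu>. a = \<mu> \<cdot>\<^sub>m 1\<^sub>m n"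
proof (cases "n = 0")
  case True
  then show ?thesis using a carrier_mat_le_1_scalar unfolding mult_domain_def by auto
next
  case False
  have lin: "lin_map n f" using f unfolding unital_schwarz_def by blast
  have ac: "a \<in> carrier_mat n n" and mult_a: "f (mat_adjoint a * a) = mat_adjoint (f a) * f a"
    using a unfolding mult_domain_def by auto
  obtain \<mu> where "\<mu> \<in> spectrum (mat_adjoint a)"
    using spectrum_non_empty[of "mat_adjoint a" n] ac False by auto
  then obtain v where v: "v \<in> carrier_vec n" "v \<noteq> 0\<^sub>v n" and ev: "mat_adjoint a *\<^sub>v v = \<mu> \<cdot>\<^sub>v v"
    unfolding spectrum_def eigenvalue_def eigenvector_def using ac by auto
  define c where "c = a + (- cnj \<mu>) \<cdot>\<^sub>m 1\<^sub>m n"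
  have cc: "c \<in> carrier_mat n n" unfolding c_def using ac by simp
  have mult_c: "f (mat_adjoint x * c) = mat_adjoint (f x) * f c" if "x \<in> carrier_mat n n" for x
    unfolding c_def by (rule unital_schwarz_mult_right_shift[OF f ac mult_a that])
  have "rank_one n v * c = 0\<^sub>m n n"
    using rank_one_mult_eq_0[OF cc v(1)] mat_adjoint_shift_mult_eigenvector_eq_0[OF ac v(1) ev]
    unfolding c_def by simp
  then have "f c = 0\<^sub>m n n"
    using strictly_positive_annihilated_eq_0[OF lin pos cc mult_c psd_rank_one rank_one_neq_0[OF v]]
    by blast
  then have "f (mat_adjoint c * c) = 0\<^sub>m n n" using mult_c[OF cc] by simp
  then have "mat_adjoint c * c = 0\<^sub>m n n"
    using strictly_positive_psd_eq_0[OF pos] psd_adjoint_mult[OF cc] False by blast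
  then have "c = 0\<^sub>m n n" by (rule adjoint_mult_self_eq_0[OF cc])
  then show ?thesis using add_smult_one_eq_0D[OF ac] unfolding c_def by blast
qed

lemma scalar_mem_mult_domain:
  assumes f: "lin_map n f" and u: "f (1\<^sub>m n) = 1\<^sub>m n"
  shows "\<mu> \<cdot>\<^sub>m 1\<^sub>m n \<in> mult_domain n f"
proof -
  have f_scalar: "f (c \<cdot>\<^sub>m 1\<^sub>m n) = c \<cdot>\<^sub>m 1\<^sub>m n" for c
    using lin_map_smult[OF f one_carrier_mat] u by simp
  show ?thesis
    unfolding mult_domain_def by (simp add: f_scalar mat_adjoint_smult smult_one_mult_smult_one)
qed

lemma primitive_mult_domain_subset_scalars:
  assumes "unital_schwarz D \<phi>" and "primitive D \<phi>"
  obtains k where "1 \<le> k" and "mult_domain D (\<phi> ^^ k) \<subseteq> {\<mu> \<cdot>\<^sub>m 1\<^sub>m D | \<mu>. True}"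
proof (cases "D \<le> 1")
  case True
  then have "mult_domain D (\<phi> ^^ 1) \<subseteq> {\<mu> \<cdot>\<^sub>m 1\<^sub>m D | \<mu>. True}"
    using carrier_mat_le_1_scalar unfolding mult_domain_def by blast
  then show ?thesis using that by blast
next
  case False
  obtain N where N: "strictly_positive D (\<phi> ^^ N)" using assms(2) unfolding primitive_iff by blast
  have "N \<noteq> 0"
  proof
    assume "N = 0"
    with N have "strictly_positive D id" by simp
    with False show False using not_strictly_positive_id by simp
  qed
  moreover have "mult_domain D (\<phi> ^^ N) \<subseteq> {\<mu> \<cdot>\<^sub>m 1\<^sub>m D | \<mu>. True}"
    using strictly_positive_mult_domain_scalar[OF unital_schwarz_funpow[OF assms(1)] N] by blast
  ultimately show ?thesis using that[of N] by simp
qed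

lemma mult_domain_inter_inf_eq:
  assumes contained: "\<And>j. S \<subseteq> mult_domain D (\<phi> ^^ j)"
    and k: "1 \<le> k" and contains: "mult_domain D (\<phi> ^^ k) \<subseteq> S"
  shows "mult_domain_inter D \<phi> = S" and "mult_domain_inf D \<phi> = S"
proof -
  show inter: "mult_domain_inter D \<phi> = S"
    using assms unfolding mult_domain_inter_def by blast
  have "\<exists>k. 1 \<le> k \<and> mult_domain_inter D \<phi> = mult_domain D (\<phi> ^^ k)"
    using inter contained k contains by blast
  then have "mult_domain_inter D \<phi> = mult_domain D (\<phi> ^^ kappa D \<phi>)"
    unfolding kappa_def by (rule LeastI2_ex) blast
  then show "mult_domain_inf D \<phi> = S" using inter unfolding mult_domain_inf_def by simp
qed

theorem lemma3p3:
  fixes D :: nat and \<phi> :: "complex mat \<Rightarrow> complex mat"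
  assumes "unital_schwarz D \<phi>" and "primitive D \<phi>"
  shows "mult_domain_inf D \<phi> = mult_domain_inter D \<phi> \<and>
         mult_domain_inter D \<phi> = {c \<cdot>\<^sub>m 1\<^sub>m D | c :: complex. True}"
proof -
  obtain k where "1 \<le> k" and "mult_domain D (\<phi> ^^ k) \<subseteq> {c \<cdot>\<^sub>m 1\<^sub>m D | c. True}"
    using primitive_mult_domain_subset_scalars[OF assms] .
  moreover have "{c \<cdot>\<^sub>m 1\<^sub>m D | c. True} \<subseteq> mult_domain D (\<phi> ^^ j)" for j
    using scalar_mem_mult_domain unital_schwarz_funpow[OF assms(1), of j]
    unfolding unital_schwarz_def by blast
  ultimately show ?thesis using mult_domain_inter_inf_eq by metis
qed

end
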